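(* Let $A=(a_{ij})\in\mathbb{R}_{\max}^{2\times 2}$ with $\lambda(A)\ne-\infty$ and $g(\mathrm{crit}(A))=2$. Then $T_1(A)=\mathrm{DM}(2,2)=2$ if and only if $a_{11}\ne a_{22}$.
   Context: Max-plus semiring $\mathbb{R}_{\max}=\mathbb{R}\cup\{-\infty\}$ with $a\oplus b=\max(a,b)$, $a\otimes b=a+b$; $(AB)_{ij}=\max_k(a_{ik}+b_{kj})$; $A^t$ is the $t$-th max-plus power, $A^0=I$. $\mathcal{D}(A)$ is the digraph with arc $(i,j)$ of weight $a_{ij}$ whenever $a_{ij}\ne-\infty$; cycles, their length and weight as usual. $\lambda(A)$ is the maximal cycle mean. $\mathrm{crit}(A)$ is the subgraph of all nodes and arcs of cycles attaining $\lambda(A)$; its nodes are critical. $g(\mathrm{crit}(A))$ is the maximum over strongly connected components of $\mathrm{crit}(A)$ of their minimal cycle length. The cyclicity of $\mathrm{crit}(A)$ is the lcm over components of the gcd of their cycle lengths. CSR terms: with $\lambda=\lambda(A)$, $\gamma$ the cyclicity of $\mathrm{crit}(A)$, $A_\lambda$ equal to $A$ with $\lambda$ subtracted from every finite entry, $M=I\oplus N\oplus\dots\oplus N^{n-1}$ where $N=A_\lambda^\gamma$: $c_{ij}=m_{ij}$ if $j$ critical, else $-\infty$; $r_{ij}=m_{ij}$ if $i$ critical, else $-\infty$; $s_{ij}=a_{ij}$ if $(i,j)$ is an arc of $\mathrm{crit}(A)$, else $-\infty$; $CS^tR[A]$ is the product $CS^tR$. $B_N$ has $(B_N)_{ij}=-\infty$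 if $i$ or $j$ is critical and $a_{ij}$ otherwise. $T_1(A)$ is the least $T\ge0$ with $A^t=CS^tR[A]\oplus B_N^t$ for all $t\ge T$. $\mathrm{DM}(g,n)=g(n-2)+n$. *)

theory Defs
  imports Complex_Main "HOL-Library.Extended_Real"
begin

text \<open>Max-plus matrices of size n x n are functions nat => nat => ereal, indices 0..n-1.
  Entries range over R_max = R \<union> {-\<infinity>} (entries +\<infinity> are excluded by hypothesis).\<close>

type_synonym mpmat = "nat \<Rightarrow> nat \<Rightarrow> ereal"

definition mp_id :: mpmat where
  "mp_id i j = (if i = j then 0 else -\<infinity>)"

definition mp_mult :: "nat \<Rightarrow> mpmat \<Rightarrow> mpmat \<Rightarrow> mpmat" where
  "mp_mult n A B i j = (SUP k\<in>{..<n}. A i k + B k j)"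

primrec mp_pow :: "nat \<Rightarrow> mpmat \<Rightarrow> nat \<Rightarrow> mpmat" where
  "mp_pow n A 0 = mp_id"
| "mp_pow n A (Suc t) = mp_mult n (mp_pow n A t) A"

text \<open>Cycles of the digraph D(A): closed walks given by their node list c = [i_0,...,i_{k-1}],
  k \<ge> 1, with arcs (i_m, i_{(m+1) mod k}).\<close>

definition cycles :: "nat \<Rightarrow> mpmat \<Rightarrow> nat list set" where
  "cycles n A = {c. c \<noteq> [] \<and> set c \<subseteq> {..<n} \<and>
      (\<forall>m<length c. A (c!m) (c!((m+1) mod length c)) \<noteq> -\<infinity>)}"

definition cweight :: "mpmat \<Rightarrow> nat list \<Rightarrow> real" where
  "cweight A c = (\<Sum>m<length c. real_of_ereal (A (c!m) (c!((m+1) mod length c))))"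

definition cmean :: "mpmat \<Rightarrow> nat list \<Rightarrow> real" where
  "cmean A c = cweight A c / real (length c)"

text \<open>Maximal cycle mean (equals -\<infinity> if there are no cycles).\<close>
definition mcm :: "nat \<Rightarrow> mpmat \<Rightarrow> ereal" where
  "mcm n A = (SUP c\<in>cycles n A. ereal (cmean A c))"

definition crit_cycle :: "nat \<Rightarrow> mpmat \<Rightarrow> nat list \<Rightarrow> bool" where
  "crit_cycle n A c \<longleftrightarrow> c \<in> cycles n A \<and> ereal (cmean A c) = mcm n A"

definition crit_arc :: "nat \<Rightarrow> mpmat \<Rightarrow> nat \<Rightarrow> nat \<Rightarrow> bool" where
  "crit_arc n A i j \<longleftrightarrow> (\<exists>c. crit_cycle n A c \<and>
      (\<exists>m<length c. c!m = i \<and> c!((m+1) mod length c) = j))"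

definition crit_node :: "nat \<Rightarrow> mpmat \<Rightarrow> nat \<Rightarrow> bool" where
  "crit_node n A i \<longleftrightarrow> (\<exists>c. crit_cycle n A c \<and> i \<in> set c)"

definition crit_graph_cycles :: "nat \<Rightarrow> mpmat \<Rightarrow> nat list set" where
  "crit_graph_cycles n A = {c. c \<noteq> [] \<and>
      (\<forall>m<length c. crit_arc n A (c!m) (c!((m+1) mod length c)))}"

definition crit_comps :: "nat \<Rightarrow> mpmat \<Rightarrow> nat set set" where
  "crit_comps n A = {C. \<exists>i. crit_node n A i \<and>
      C = {j. (i,j) \<in> {(x,y). crit_arc n A x y}\<^sup>* \<and> (j,i) \<in> {(x,y). crit_arc n A x y}\<^sup>*}}"

definition comp_cycles :: "nat \<Rightarrow> mpmat \<Rightarrow> nat set \<Rightarrow> nat list set" where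
  "comp_cycles n A C = {c \<in> crit_graph_cycles n A. set c \<subseteq> C}"

definition comp_girth :: "nat \<Rightarrow> mpmat \<Rightarrow> nat set \<Rightarrow> nat" where
  "comp_girth n A C = (LEAST k. \<exists>c\<in>comp_cycles n A C. length c = k)"

definition g_crit :: "nat \<Rightarrow> mpmat \<Rightarrow> nat" where
  "g_crit n A = Max (comp_girth n A ` crit_comps n A)"

definition crit_cyclicity :: "nat \<Rightarrow> mpmat \<Rightarrow> nat" where
  "crit_cyclicity n A = Lcm ((\<lambda>C. Gcd (length ` comp_cycles n A C)) ` crit_comps n A)"

definition A_lam :: "nat \<Rightarrow> mpmat \<Rightarrow> mpmat" where
  "A_lam n A i j = A i j - mcm n A"

definition N_mat :: "nat \<Rightarrow> mpmat \<Rightarrow> mpmat" where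
  "N_mat n A = mp_pow n (A_lam n A) (crit_cyclicity n A)"

definition M_mat :: "nat \<Rightarrow> mpmat \<Rightarrow> mpmat" where
  "M_mat n A i j = (SUP k\<in>{..<n}. mp_pow n (N_mat n A) k i j)"

definition C_mat :: "nat \<Rightarrow> mpmat \<Rightarrow> mpmat" where
  "C_mat n A i j = (if crit_node n A j then M_mat n A i j else -\<infinity>)"

definition R_mat :: "nat \<Rightarrow> mpmat \<Rightarrow> mpmat" where
  "R_mat n A i j = (if crit_node n A i then M_mat n A i j else -\<infinity>)"

definition S_mat :: "nat \<Rightarrow> mpmat \<Rightarrow> mpmat" where
  "S_mat n A i j = (if crit_arc n A i j then A i j else -\<infinity>)"

definition CSR :: "nat \<Rightarrow> mpmat \<Rightarrow> nat \<Rightarrow> mpmat" where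
  "CSR n A t = mp_mult n (mp_mult n (C_mat n A) (mp_pow n (S_mat n A) t)) (R_mat n A)"

definition B_N :: "nat \<Rightarrow> mpmat \<Rightarrow> mpmat" where
  "B_N n A i j = (if crit_node n A i \<or> crit_node n A j then -\<infinity> else A i j)"

definition T1 :: "nat \<Rightarrow> mpmat \<Rightarrow> nat" where
  "T1 n A = (LEAST T. \<forall>t\<ge>T. \<forall>i<n. \<forall>j<n.
      mp_pow n A t i j = max (CSR n A t i j) (mp_pow n (B_N n A) t i j))"

definition DM :: "nat \<Rightarrow> nat \<Rightarrow> nat" where
  "DM g n = g * (n - 2) + n"

end

theory Submission
  imports Defs
begin

text \<open>
  If a diagonal entry attains \<open>\<lambda>\<close>, its loop is critical and, with only two nodes, lies in
  every critical component, so \<open>g(crit A) = 1\<close>. Hence \<open>g(crit A) = 2\<close> forces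
  \<open>a\<^sub>1\<^sub>1, a\<^sub>2\<^sub>2 < \<lambda> = (a\<^sub>1\<^sub>2 + a\<^sub>2\<^sub>1)/2\<close>: the critical graph is the 2-cycle, of cyclicity 2,
  both nodes are critical and \<open>B\<^sub>N\<close> vanishes.
  After conjugating by the potential \<open>\<phi>(1) = 0\<close>, \<open>\<phi>(2) = a\<^sub>1\<^sub>2 - \<lambda>\<close> all entries of
  \<open>A\<^sup>t\<close> (\<open>t \<ge> 2\<close>) and of \<open>CS\<^sup>tR\<close> (\<open>t \<ge> 1\<close>) equal \<open>t\<lambda>\<close>, except that the entries of the
  parity not served by the 2-cycle carry the defect \<open>max(a\<^sub>1\<^sub>1, a\<^sub>2\<^sub>2) - \<lambda>\<close>. So the CSR
  expansion holds from \<open>t = 2\<close> on, and at \<open>t = 1\<close> it holds iff the diagonal of \<open>A\<close> is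
  constant, i.e. \<open>a\<^sub>1\<^sub>1 = a\<^sub>2\<^sub>2\<close>.
\<close>

lemma less_2_iff: "(i::nat) < 2 \<longleftrightarrow> i = 0 \<or> i = 1"
  by auto

lemma Least_eq_Suc_iff:
  fixes P :: "nat \<Rightarrow> bool"
  assumes up: "\<And>m k. P m \<Longrightarrow> m \<le> k \<Longrightarrow> P k" and "P (Suc n)"
  shows "(LEAST k. P k) = Suc n \<longleftrightarrow> \<not> P n"
proof
  assume "(LEAST k. P k) = Suc n"
  then show "\<not> P n" using Least_le[of P n] by auto
next
  assume "\<not> P n"
  then have "\<not> P m" if "m \<le> n" for m using up that by blast
  then show "(LEAST k. P k) = Suc n"
    using \<open>P (Suc n)\<close> by (intro Least_equality) (auto simp: not_less_eq_eq[symmetric])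
qed

lemma sum_lessThan_rotate:
  fixes f :: "nat \<Rightarrow> 'a::comm_monoid_add"
  assumes "0 < n"
  shows "(\<Sum>m<n. f ((m + 1) mod n)) = (\<Sum>m<n. f m)"
proof -
  obtain k where n: "n = Suc k" using assms by (cases n) auto
  have "(\<Sum>m<Suc k. f ((m + 1) mod Suc k)) = (\<Sum>m<k. f (Suc m)) + f 0"
    by (simp add: lessThan_Suc add.commute)
  also have "\<dots> = (\<Sum>m<Suc k. f m)"
    by (simp only: sum.lessThan_Suc_shift add.commute)
  finally show ?thesis unfolding n .
qed

lemma mp_mult_2: "mp_mult 2 X Y i j = max (X i 0 + Y 0 j) (X i 1 + Y 1 j)"
  by (simp add: mp_mult_def numeral_2_eq_2 lessThan_Suc sup_max max.commute)

lemma mp_mult_cong: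
  assumes "\<And>k. k < n \<Longrightarrow> X i k = X' i k" "\<And>k. k < n \<Longrightarrow> Y k j = Y' k j"
  shows "mp_mult n X Y i j = mp_mult n X' Y' i j"
  unfolding mp_mult_def using assms by (intro SUP_cong) auto

lemma mp_mult_ge: "k < n \<Longrightarrow> X i k + Y k j \<le> mp_mult n X Y i j"
  unfolding mp_mult_def by (rule SUP_upper) simp

lemma mp_mult_id_left:
  assumes "i < n" "\<And>k. k < n \<Longrightarrow> X k j \<noteq> \<infinity>"
  shows "mp_mult n mp_id X i j = X i j"
  unfolding mp_mult_def
proof (rule antisym)
  show "(SUP k\<in>{..<n}. mp_id i k + X k j) \<le> X i j"
  proof (rule SUP_least)
    fix k assume "k \<in> {..<n}"
    then show "mp_id i k + X k j \<le> X i j"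
      using assms(2)[of k] by (cases "X k j") (auto simp: mp_id_def)
  qed
  show "X i j \<le> (SUP k\<in>{..<n}. mp_id i k + X k j)"
    using assms(1) by (intro SUP_upper2[of i]) (auto simp: mp_id_def)
qed

lemma mp_mult_null_right:
  assumes "\<And>k. k < n \<Longrightarrow> Y i k \<noteq> \<infinity>" "\<And>k. k < n \<Longrightarrow> X k j = -\<infinity>"
  shows "mp_mult n Y X i j = -\<infinity>"
  unfolding mp_mult_def bot_ereal_def[symmetric] SUP_bot_conv
  using assms by (auto simp: bot_ereal_def)

lemma mp_pow_Suc_null_rows:
  assumes "\<And>k j. k < n \<Longrightarrow> X k j = -\<infinity>" "i < n"
  shows "mp_pow n X (Suc t) i j = -\<infinity>"
proof (induction t arbitrary: j)
  case 0
  show ?case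
    unfolding mp_pow.simps by (rule mp_mult_null_right) (auto simp: mp_id_def assms)
next
  case (Suc t)
  show ?case
    unfolding mp_pow.simps(2)[of n X "Suc t"]
  proof (rule mp_mult_null_right)
    fix k assume "k < n"
    show "mp_pow n X (Suc t) i k \<noteq> \<infinity>" unfolding Suc.IH by simp
    show "X k j = -\<infinity>" using assms(1) \<open>k < n\<close> .
  qed
qed

lemma cycle_arc:
  assumes "c \<in> cycles n A" "m < length c"
  shows "c ! m < n" "c ! ((m + 1) mod length c) < n"
    "A (c ! m) (c ! ((m + 1) mod length c)) \<noteq> -\<infinity>"
  using assms unfolding cycles_def by (auto simp: subset_iff)

lemma loop_cycle:
  assumes "k < n" "A k k = ereal a"
  shows "[k] \<in> cycles n A" "cmean A [k] = a"
  using assms unfolding cycles_def cmean_def cweight_def by auto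

lemma two_cycle:
  assumes "A 0 1 = ereal a" "A 1 0 = ereal b"
  shows "[0, 1] \<in> cycles 2 A" "cmean A [0, 1] = (a + b) / 2"
proof -
  show "[0, 1] \<in> cycles 2 A"
    using assms unfolding cycles_def by (auto simp: less_Suc_eq)
  have "{..<2::nat} = {0, 1}" by auto
  then show "cmean A [0, 1] = (a + b) / 2"
    using assms unfolding cmean_def cweight_def by simp
qed

lemma cweight_potential:
  fixes \<phi> :: "nat \<Rightarrow> real"
  assumes c: "c \<in> cycles n A"
    and fin: "\<forall>i<n. \<forall>j<n. A i j \<noteq> \<infinity>"
    and pot: "\<forall>i<n. \<forall>j<n. A i j \<le> ereal (r + \<phi> j - \<phi> i)"
  shows "cweight A c \<le> real (length c) * r"
    and "m < length c \<Longrightarrow>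
      A (c ! m) (c ! ((m + 1) mod length c)) < ereal (r + \<phi> (c ! ((m + 1) mod length c)) - \<phi> (c ! m))
      \<Longrightarrow> cweight A c < real (length c) * r"
proof -
  let ?l = "length c"
  let ?a = "\<lambda>m. A (c ! m) (c ! ((m + 1) mod ?l))"
  define w where "w m = real_of_ereal (?a m)" for m
  define u where "u m = r + \<phi> (c ! ((m + 1) mod ?l)) - \<phi> (c ! m)" for m
  have a: "?a m = ereal (w m)" "?a m \<le> ereal (u m)" if "m < ?l" for m
  proof -
    have "?a m \<noteq> \<infinity>" "?a m \<noteq> -\<infinity>" "?a m \<le> ereal (u m)"
      using cycle_arc[OF c that] fin pot unfolding u_def by auto
    then show "?a m = ereal (w m)" "?a m \<le> ereal (u m)"
      unfolding w_def by (cases "?a m"; simp)+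
  qed
  have "0 < ?l" using c unfolding cycles_def by auto
  then have "(\<Sum>m<?l. u m) = real ?l * r"
    using sum_lessThan_rotate[of ?l "\<lambda>m. \<phi> (c ! m)"]
    unfolding u_def by (simp add: sum.distrib sum_subtractf)
  moreover have w: "cweight A c = (\<Sum>m<?l. w m)"
    unfolding cweight_def w_def ..
  moreover have wu: "w m \<le> u m" if "m < ?l" for m
    using a[OF that] by simp
  ultimately show "cweight A c \<le> real ?l * r"
    by (metis lessThan_iff sum_mono)
  assume "m < ?l" "?a m < ereal (u m)"
  then have "w m < u m" using a by simp
  then have "(\<Sum>m<?l. w m) < (\<Sum>m<?l. u m)"
    using wu \<open>m < ?l\<close> by (intro sum_strict_mono_ex1) auto
  then show "cweight A c < real ?l * r"
    using w \<open>(\<Sum>m<?l. u m) = real ?l * r\<close> by simp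
qed

lemma cmean_le_mcm: "c \<in> cycles n A \<Longrightarrow> ereal (cmean A c) \<le> mcm n A"
  unfolding mcm_def by (rule SUP_upper)

lemma mcm_le_potential:
  fixes \<phi> :: "nat \<Rightarrow> real"
  assumes fin: "\<forall>i<n. \<forall>j<n. A i j \<noteq> \<infinity>"
    and pot: "\<forall>i<n. \<forall>j<n. A i j \<le> ereal (r + \<phi> j - \<phi> i)"
  shows "mcm n A \<le> ereal r"
  unfolding mcm_def
proof (rule SUP_least)
  fix c assume c: "c \<in> cycles n A"
  then have "0 < length c" unfolding cycles_def by auto
  then show "ereal (cmean A c) \<le> ereal r"
    using cweight_potential(1)[OF c fin pot]
    by (simp add: cmean_def divide_le_eq mult.commute)
qed

lemma crit_arc_tight:
  fixes \<phi> :: "nat \<Rightarrow> real"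
  assumes fin: "\<forall>i<n. \<forall>j<n. A i j \<noteq> \<infinity>"
    and pot: "\<forall>i<n. \<forall>j<n. A i j \<le> ereal (r + \<phi> j - \<phi> i)"
    and "mcm n A = ereal r" "crit_arc n A i j"
  shows "A i j = ereal (r + \<phi> j - \<phi> i)"
proof (rule ccontr)
  assume ne: "A i j \<noteq> ereal (r + \<phi> j - \<phi> i)"
  obtain c m where c: "crit_cycle n A c" "m < length c"
    and ij: "c ! m = i" "c ! ((m + 1) mod length c) = j"
    using assms(4) unfolding crit_arc_def by blast
  have cyc: "c \<in> cycles n A" and mean: "cmean A c = r"
    using c(1) assms(3) unfolding crit_cycle_def by auto
  have "A i j < ereal (r + \<phi> j - \<phi> i)"
    using ne pot cycle_arc(1,2)[OF cyc c(2)] ij by (auto simp: order_less_le)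
  then have "cweight A c < real (length c) * r"
    using cweight_potential(2)[OF cyc fin pot c(2)] ij by simp
  moreover have "0 < length c" using c(2) by linarith
  ultimately have "cmean A c < r" by (simp add: cmean_def divide_less_eq mult.commute)
  with mean show False by simp
qed

lemma mcm_2x2:
  assumes fin: "\<forall>i<2. \<forall>j<2. A i j \<noteq> \<infinity>"
  shows "mcm 2 A = max (max (A 0 0) (A 1 1)) ((A 0 1 + A 1 0) / 2)" (is "_ = ?m")
proof (rule antisym)
  show "mcm 2 A \<le> ?m"
  proof (rule ereal_le_real)
    fix r assume "?m \<le> ereal r"
    then have r: "A 0 0 \<le> ereal r" "A 1 1 \<le> ereal r" "(A 0 1 + A 1 0) / 2 \<le> ereal r"
      by simp_all
    have r3: "A 0 1 + A 1 0 \<le> ereal (2 * r)"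
      using r(3) fin by (cases "A 0 1"; cases "A 1 0") simp_all
    define \<phi> where "\<phi> i = (if i = 0 then 0 else if A 0 1 = -\<infinity>
      then r - real_of_ereal (A 1 0) else real_of_ereal (A 0 1) - r)" for i :: nat
    have "A 0 1 \<le> ereal (r + \<phi> 1 - \<phi> 0)" "A 1 0 \<le> ereal (r + \<phi> 0 - \<phi> 1)"
      using r3 fin unfolding \<phi>_def by (cases "A 0 1"; cases "A 1 0"; simp)+
    then have "\<forall>i<2. \<forall>j<2. A i j \<le> ereal (r + \<phi> j - \<phi> i)"
      using r(1,2) unfolding less_2_iff by auto
    then show "mcm 2 A \<le> ereal r" by (rule mcm_le_potential[OF fin])
  qed
  have "A k k \<le> mcm 2 A" if "k < 2" for k
  proof (cases "A k k")
    case (real a)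
    then show ?thesis
      using cmean_le_mcm[OF loop_cycle(1)[of k 2 A, OF that real]] loop_cycle(2)[of k 2 A, OF that real]
      by simp
  qed (use fin that in auto)
  moreover have "(A 0 1 + A 1 0) / 2 \<le> mcm 2 A"
  proof (cases "A 0 1 = -\<infinity> \<or> A 1 0 = -\<infinity>")
    case False
    then obtain a b where ab: "A 0 1 = ereal a" "A 1 0 = ereal b"
      using fin by (cases "A 0 1"; cases "A 1 0") auto
    have "ereal ((a + b) / 2) \<le> mcm 2 A"
      using cmean_le_mcm[OF two_cycle(1)[OF ab]] unfolding two_cycle(2)[OF ab] .
    then show ?thesis using ab by simp
  next
    case True
    then have sum: "A 0 1 + A 1 0 = -\<infinity>"
      using fin by (cases "A 0 1"; cases "A 1 0") auto
    show ?thesis unfolding sum by simp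
  qed
  ultimately show "?m \<le> mcm 2 A" by simp
qed

lemma crit_cycle_arc:
  "crit_cycle n A c \<Longrightarrow> m < length c \<Longrightarrow> crit_arc n A (c ! m) (c ! ((m + 1) mod length c))"
  unfolding crit_arc_def by blast

lemma crit_node_less: "crit_node n A i \<Longrightarrow> i < n"
  unfolding crit_node_def crit_cycle_def cycles_def by auto

lemma crit_cycle_reach:
  assumes "crit_cycle n A c" "m < length c" "m' < length c"
  shows "(c ! m, c ! m') \<in> {(x, y). crit_arc n A x y}\<^sup>*"
proof -
  have "(c ! m, c ! ((m + d) mod length c)) \<in> {(x, y). crit_arc n A x y}\<^sup>*" for d
  proof (induction d)
    case (Suc d)
    have "(m + d) mod length c < length c" using assms(2) by (intro mod_less_divisor) linarith
    then have "crit_arc n A (c ! ((m + d) mod length c)) (c ! ((m + Suc d) mod length c))"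
      using crit_cycle_arc[OF assms(1)] by (metis add_Suc_right mod_Suc_eq Suc_eq_plus1)
    with Suc show ?case by (auto intro: rtrancl_into_rtrancl)
  qed (use assms(2) in simp)
  moreover have "(m + (m' + length c - m)) mod length c = m'"
    using assms(2,3) by (simp add: le_mod_geq)
  ultimately show ?thesis by metis
qed

lemma alternating_cycle_even:
  fixes c :: "nat list"
  assumes "c \<noteq> []"
    and alt: "\<And>m. m < length c \<Longrightarrow> {c ! m, c ! ((m + 1) mod length c)} = {0, 1}"
  shows "even (length c)"
proof -
  let ?l = "length c"
  have "c ! m + c ! ((m + 1) mod ?l) = 1" if "m < ?l" for m
    using alt[OF that] by (auto simp: doubleton_eq_iff)
  then have "?l = (\<Sum>m<?l. c ! m + c ! ((m + 1) mod ?l))" by simp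
  also have "\<dots> = 2 * (\<Sum>m<?l. c ! m)"
    using sum_lessThan_rotate[of ?l "\<lambda>m. c ! m"] assms(1) by (simp add: sum.distrib)
  finally show ?thesis by (metis dvd_triv_left)
qed

lemma critical_loop_girth:
  assumes mcm: "mcm 2 A = ereal L" and k: "k < 2" "A k k = ereal L"
  shows "g_crit 2 A \<le> 1"
proof -
  let ?R = "{(x, y). crit_arc 2 A x y}"
  define SCC where "SCC i = {j. (i, j) \<in> ?R\<^sup>* \<and> (j, i) \<in> ?R\<^sup>*}" for i
  have comps: "crit_comps 2 A = SCC ` {i. crit_node 2 A i}"
    unfolding crit_comps_def SCC_def by auto
  have k_crit: "crit_cycle 2 A [k]"
    using loop_cycle[of k 2 A, OF k] mcm unfolding crit_cycle_def by auto
  have "finite {i. crit_node 2 A i}"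
    by (rule finite_subset[of _ "{..<2}"]) (auto dest: crit_node_less)
  then have fin: "finite (crit_comps 2 A)" unfolding comps by simp
  have "crit_node 2 A k" using k_crit unfolding crit_node_def by force
  then have ne: "crit_comps 2 A \<noteq> {}" unfolding comps by auto
  have "comp_girth 2 A C \<le> 1" if C: "C \<in> crit_comps 2 A" for C
  proof -
    obtain i c where c: "crit_cycle 2 A c" "i \<in> set c" and Ci: "C = SCC i"
      using C unfolding comps crit_node_def by auto
    have "set c \<subseteq> {0, 1}" using c(1) unfolding crit_cycle_def cycles_def by auto
    have "\<exists>k'. crit_arc 2 A k' k' \<and> k' \<in> C"
    proof (cases "k \<in> set c")
      case True
      then have "k \<in> C"
        using crit_cycle_reach[OF c(1)] c(2) unfolding Ci SCC_def by (auto simp: in_set_conv_nth)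
      then show ?thesis using crit_cycle_arc[OF k_crit, of 0] by auto
    next
      case False
      with \<open>set c \<subseteq> {0, 1}\<close> c(2) k(1) have "set c = {i}" by (auto simp: less_2_iff)
      moreover have "0 < length c" using c(2) by (cases c) auto
      ultimately have "crit_arc 2 A i i"
        using crit_cycle_arc[OF c(1), of 0] by (metis insert_iff nth_mem empty_iff mod_less_divisor)
      then show ?thesis unfolding Ci SCC_def by auto
    qed
    then obtain k' where "crit_arc 2 A k' k'" "k' \<in> C" by blast
    then have "[k'] \<in> comp_cycles 2 A C"
      unfolding comp_cycles_def crit_graph_cycles_def by auto
    then show ?thesis unfolding comp_girth_def by (intro Least_le) force
  qed
  then show ?thesis unfolding g_crit_def using fin ne by simp
qed

text \<open>The situation forced by the hypotheses (paper indices 1, 2 are 0, 1 here):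
  \<open>L = \<lambda>(A)\<close> is attained only by the 2-cycle.\<close>
locale dominant_two_cycle =
  fixes A :: mpmat and L p q :: real
  assumes diag_lt: "A 0 0 < ereal L" "A 1 1 < ereal L"
    and A01: "A 0 1 = ereal p" and A10: "A 1 0 = ereal q"
    and two_cycle_mean: "p + q = 2 * L"
begin

\<comment> \<open>the \<open>Suc 0\<close> forms are needed because simp normalises the index \<open>1\<close> in some goals\<close>
lemmas A_offdiag = A01 A10 A01[unfolded One_nat_def] A10[unfolded One_nat_def]

lemma A_finite: "i < 2 \<Longrightarrow> j < 2 \<Longrightarrow> A i j \<noteq> \<infinity>"
  using diag_lt by (auto simp: less_2_iff A_offdiag)

definition pot :: "nat \<Rightarrow> real" where
  "pot i = (if i = 0 then 0 else p - L)"

lemma A_le_potential: "\<forall>i<2. \<forall>j<2. A i j \<le> ereal (L + pot j - pot i)"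
  using diag_lt two_cycle_mean by (auto simp: less_2_iff A_offdiag pot_def)

lemma mcm_eq: "mcm 2 A = ereal L"
  using A_finite diag_lt two_cycle_mean by (simp add: mcm_2x2 A_offdiag)

lemma crit_two_cycle: "crit_cycle 2 A [0, 1]"
  using two_cycle[OF A01 A10] two_cycle_mean unfolding crit_cycle_def mcm_eq by simp

lemma crit_arc_iff: "crit_arc 2 A i j \<longleftrightarrow> i < 2 \<and> j < 2 \<and> i \<noteq> j"
proof
  assume arc: "crit_arc 2 A i j"
  then have "i < 2" "j < 2"
    unfolding crit_arc_def crit_cycle_def using cycle_arc(1,2) by blast+
  moreover have "A i j = ereal (L + pot j - pot i)"
    using crit_arc_tight[OF _ A_le_potential mcm_eq arc] A_finite by blast
  ultimately show "i < 2 \<and> j < 2 \<and> i \<noteq> j"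
    using diag_lt by (auto simp: less_2_iff)
next
  assume "i < 2 \<and> j < 2 \<and> i \<noteq> j"
  then have "(i, j) = (0, 1) \<or> (i, j) = (1, 0)" by auto
  then show "crit_arc 2 A i j"
    using crit_cycle_arc[OF crit_two_cycle, of 0] crit_cycle_arc[OF crit_two_cycle, of 1] by auto
qed

lemma crit_node_iff: "crit_node 2 A i \<longleftrightarrow> i < 2"
proof (rule iffI[OF crit_node_less])
  assume "i < 2"
  then have "i \<in> set [0, 1]" by auto
  then show "crit_node 2 A i" using crit_two_cycle unfolding crit_node_def by blast
qed

lemma crit_comps_eq: "crit_comps 2 A = {{0, 1}}"
proof -
  let ?R = "{(x, y). crit_arc 2 A x y}"
  have R: "?R = {(x, y). x < 2 \<and> y < 2 \<and> x \<noteq> y}" using crit_arc_iff by auto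
  have scc: "(i, j) \<in> ?R\<^sup>* \<and> (j, i) \<in> ?R\<^sup>* \<longleftrightarrow> j \<in> {0, 1}" if "i < 2" for i j
  proof
    assume "(i, j) \<in> ?R\<^sup>* \<and> (j, i) \<in> ?R\<^sup>*"
    then have "j = i \<or> j < 2" unfolding R by (auto elim: rtranclE)
    then show "j \<in> {0, 1}" using that by auto
  next
    assume "j \<in> {0, 1}"
    then show "(i, j) \<in> ?R\<^sup>* \<and> (j, i) \<in> ?R\<^sup>*"
      using that unfolding R by (cases "i = j") (auto intro: r_into_rtrancl)
  qed
  have "crit_comps 2 A = (\<lambda>i. {j. (i, j) \<in> ?R\<^sup>* \<and> (j, i) \<in> ?R\<^sup>*}) ` {..<2}"
    unfolding crit_comps_def crit_node_iff by auto
  also have "\<dots> = (\<lambda>i. {0, 1}) ` {..<2::nat}"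
    using scc by (intro image_cong) auto
  also have "\<dots> = {{0, 1}}" by (rule image_constant[of 0]) simp
  finally show ?thesis .
qed

lemma crit_cyclicity_eq: "crit_cyclicity 2 A = 2"
proof -
  have "set c \<subseteq> {0, 1}" if "c \<in> crit_graph_cycles 2 A" for c
  proof
    fix x assume "x \<in> set c"
    then obtain m where "m < length c" "x = c ! m" by (auto simp: in_set_conv_nth)
    then show "x \<in> {0, 1}"
      using that unfolding crit_graph_cycles_def crit_arc_iff by auto
  qed
  then have cycles: "comp_cycles 2 A {0, 1} = crit_graph_cycles 2 A"
    unfolding comp_cycles_def by auto
  have "[0, 1] \<in> crit_graph_cycles 2 A"
    unfolding crit_graph_cycles_def crit_arc_iff by (auto simp: less_Suc_eq)
  then have "length [0::nat, 1] \<in> length ` crit_graph_cycles 2 A" by (rule imageI)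
  then have "Gcd (length ` crit_graph_cycles 2 A) dvd length [0::nat, 1]" by (rule Gcd_dvd)
  then have "Gcd (length ` crit_graph_cycles 2 A) dvd 2" by (simp add: numeral_2_eq_2)
  moreover have "2 dvd Gcd (length ` crit_graph_cycles 2 A)"
  proof (rule Gcd_greatest)
    fix l assume "l \<in> length ` crit_graph_cycles 2 A"
    then obtain c where c: "c \<in> crit_graph_cycles 2 A" "l = length c" by blast
    then have "{c ! m, c ! ((m + 1) mod length c)} = {0, 1}" if "m < length c" for m
      using that unfolding crit_graph_cycles_def crit_arc_iff by (auto simp: less_2_iff)
    moreover have "c \<noteq> []" using c(1) unfolding crit_graph_cycles_def by simp
    ultimately show "2 dvd l" using alternating_cycle_even c(2) by metis
  qed
  ultimately show ?thesis
    unfolding crit_cyclicity_def crit_comps_eq image_insert image_empty cycles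
    by (simp add: dvd_antisym)
qed

definition \<delta> :: ereal where
  "\<delta> = max (A 0 0) (A 1 1) - ereal L"

text \<open>\<open>cyc d t\<close> is \<open>L\<^sup>t\<close> conjugated by \<open>pot\<close>, with the defect \<open>d\<close> on the entries whose parity
  \<open>t + i + j\<close> is odd, i.e. not reachable by a walk of length \<open>t\<close> around the 2-cycle.
  On indices \<open>< 2\<close>, \<open>A\<^sup>t\<close> (\<open>t \<ge> 2\<close>) and \<open>CS\<^sup>tR\<close> are \<open>cyc \<delta> t\<close> and \<open>S\<^sup>t\<close> is \<open>cyc (-\<infinity>) t\<close>.\<close>
definition cyc :: "ereal \<Rightarrow> nat \<Rightarrow> mpmat" where
  "cyc d t i j = ereal (real t * L + pot j - pot i) + (if even (t + i + j) then 0 else d)"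

lemma delta_neg: "\<delta> < 0"
proof -
  define m where "m = max (A 0 0) (A 1 1)"
  have "m < ereal L" using diag_lt unfolding m_def by simp
  then show ?thesis unfolding \<delta>_def m_def[symmetric] by (cases m) auto
qed

lemma cyc_term:
  "cyc d s i k + cyc d' t k j = ereal (real (s + t) * L + pot j - pot i) +
     ((if even (s + i + k) then 0 else d) + (if even (t + k + j) then 0 else d'))"
  unfolding cyc_def by (simp add: algebra_simps ac_simps)

lemma cyc_mult:
  assumes "d \<le> 0" "d' \<le> 0" "i < 2" "j < 2"
  shows "mp_mult 2 (cyc d s) (cyc d' t) i j = cyc (max d d') (s + t) i j"
proof -
  have "d \<noteq> \<infinity>" "d' \<noteq> \<infinity>" using assms by auto
  then show ?thesis using assms
    unfolding mp_mult_2 cyc_def pot_def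
    by (cases d; cases d'; cases "even s"; cases "even t")
       (auto simp: less_2_iff algebra_simps max_def)
qed

lemma cyc_1_diag: "cyc \<delta> 1 i i = max (A 0 0) (A 1 1)"
  using diag_lt unfolding cyc_def \<delta>_def
  by (cases "max (A 0 0) (A 1 1)") auto

lemma cyc_1_offdiag: "i < 2 \<Longrightarrow> j < 2 \<Longrightarrow> i \<noteq> j \<Longrightarrow> cyc d 1 i j = A i j"
  using two_cycle_mean unfolding cyc_def pot_def
  by (auto simp: less_2_iff A_offdiag algebra_simps)

lemma A_le_cyc_1:
  assumes "i < 2" "j < 2"
  shows "A i j \<le> cyc \<delta> 1 i j"
proof (cases "i = j")
  case True
  have "A i i \<le> max (A 0 0) (A 1 1)" using assms by (auto simp: less_2_iff)
  then show ?thesis unfolding True cyc_1_diag .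
next
  case False
  show ?thesis unfolding cyc_1_offdiag[OF assms False] by (rule order.refl)
qed

lemma cyc_mult_A:
  assumes "i < 2" "j < 2"
  shows "mp_mult 2 (cyc \<delta> t) A i j = cyc \<delta> (Suc t) i j"
proof (rule antisym)
  have "mp_mult 2 (cyc \<delta> t) A i j \<le> mp_mult 2 (cyc \<delta> t) (cyc \<delta> 1) i j"
    unfolding mp_mult_2 using assms by (intro max.mono add_left_mono A_le_cyc_1) auto
  also have "\<dots> = cyc \<delta> (Suc t) i j"
    using cyc_mult[of \<delta> \<delta> i j t 1] delta_neg assms by simp
  finally show "mp_mult 2 (cyc \<delta> t) A i j \<le> cyc \<delta> (Suc t) i j" .
  define k where "k = 1 - j"
  have k: "k < 2" "k \<noteq> j" "k + j = 1" using assms unfolding k_def by arith+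
  have "even (t + i + k) \<longleftrightarrow> even (Suc t + i + j)" "even (1 + k + j)"
    using k(3) by presburger+
  then have "cyc \<delta> (Suc t) i j = cyc \<delta> t i k + cyc \<delta> 1 k j"
    unfolding cyc_term unfolding cyc_def by (simp add: algebra_simps)
  also have "\<dots> = cyc \<delta> t i k + A k j"
    unfolding cyc_1_offdiag[OF k(1) assms(2) k(2)] ..
  also have "\<dots> \<le> mp_mult 2 (cyc \<delta> t) A i j"
    using k(1) by (rule mp_mult_ge)
  finally show "cyc \<delta> (Suc t) i j \<le> mp_mult 2 (cyc \<delta> t) A i j" .
qed

lemma A_square:
  assumes "i < 2" "j < 2"
  shows "mp_mult 2 A A i j = cyc \<delta> 2 i j"
proof -
  have "i = 0 \<or> i = 1" "j = 0 \<or> j = 1" using assms by auto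
  then show ?thesis
    using diag_lt two_cycle_mean unfolding mp_mult_2 cyc_def pot_def \<delta>_def
    apply (cases "A 0 0"; cases "A 1 1"; elim disjE)
    by (simp_all add: A_offdiag algebra_simps max_def)
qed

lemma A_pow:
  assumes "i < 2" "j < 2" "2 \<le> t"
  shows "mp_pow 2 A t i j = cyc \<delta> t i j"
proof -
  obtain s where t: "t = Suc (Suc s)" using assms(3) by (metis add_2_eq_Suc le_Suc_ex)
  have "mp_pow 2 A (Suc (Suc s)) i j = cyc \<delta> (Suc (Suc s)) i j" if "i < 2" "j < 2" for i j
    using that
  proof (induction s arbitrary: i j)
    case 0
    have "mp_pow 2 A (Suc (Suc 0)) i j = mp_mult 2 (mp_pow 2 A 1) A i j" by simp
    also have "\<dots> = mp_mult 2 A A i j"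
      using 0 A_finite by (intro mp_mult_cong) (auto intro: mp_mult_id_left)
    finally show ?case using A_square[OF 0] by (simp add: eval_nat_numeral)
  next
    case (Suc s)
    have "mp_pow 2 A (Suc (Suc (Suc s))) i j = mp_mult 2 (cyc \<delta> (Suc (Suc s))) A i j"
      unfolding mp_pow.simps(2)[of 2 A "Suc (Suc s)"] using Suc by (intro mp_mult_cong) auto
    then show ?case using cyc_mult_A[OF Suc.prems] by simp
  qed
  then show ?thesis using assms unfolding t by blast
qed

lemma A_eq_cyc_1_iff: "(\<forall>i<2. \<forall>j<2. A i j = cyc \<delta> 1 i j) \<longleftrightarrow> A 0 0 = A 1 1"
proof -
  have "(\<forall>i<2. \<forall>j<2. A i j = cyc \<delta> 1 i j) \<longleftrightarrow> (\<forall>i<2. A i i = max (A 0 0) (A 1 1))"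
    using cyc_1_diag cyc_1_offdiag by (metis less_2_iff)
  also have "\<dots> \<longleftrightarrow> A 0 0 = A 1 1" by (auto simp: less_2_iff max_def)
  finally show ?thesis .
qed

lemma S_pow:
  assumes "i < 2" "j < 2"
  shows "mp_pow 2 (S_mat 2 A) t i j = cyc (-\<infinity>) t i j"
  using assms
proof (induction t arbitrary: i j)
  case 0
  then show ?case by (auto simp: mp_id_def cyc_def less_2_iff)
next
  case (Suc t)
  have S: "S_mat 2 A k l = cyc (-\<infinity>) 1 k l" if "k < 2" "l < 2" for k l
  proof (cases "k = l")
    case True
    then show ?thesis by (simp add: S_mat_def crit_arc_iff cyc_def)
  next
    case False
    then show ?thesis
      unfolding cyc_1_offdiag[OF that False] using that by (simp add: S_mat_def crit_arc_iff)
  qed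
  have "mp_pow 2 (S_mat 2 A) (Suc t) i j = mp_mult 2 (cyc (-\<infinity>) t) (cyc (-\<infinity>) 1) i j"
    using Suc S by (auto intro: mp_mult_cong)
  then show ?case using cyc_mult[of "-\<infinity>" "-\<infinity>" i j t 1] Suc.prems by simp
qed

lemma N_mat_eq:
  assumes "i < 2" "j < 2"
  shows "N_mat 2 A i j = cyc \<delta> 0 i j"
proof -
  have lam: "A_lam 2 A k l = A k l - ereal L" for k l
    unfolding A_lam_def mcm_eq ..
  \<comment> \<open>\<open>A\<^sub>\<lambda>\<close> is again of this form, with \<open>\<lambda> = 0\<close>, and \<open>N = A\<^sub>\<lambda>\<^sup>2\<close>\<close>
  interpret lam: dominant_two_cycle "A_lam 2 A" 0 "p - L" "q - L"
    using diag_lt two_cycle_mean unfolding lam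
    by unfold_locales (auto simp: A_offdiag ereal_minus_less_iff)
  have "N_mat 2 A i j = lam.cyc lam.\<delta> 2 i j"
    unfolding N_mat_def crit_cyclicity_eq using lam.A_pow assms by simp
  also have "\<dots> = cyc \<delta> 0 i j"
    unfolding lam.cyc_def cyc_def lam.pot_def pot_def lam.\<delta>_def \<delta>_def lam
    using diag_lt by (cases "A 0 0"; cases "A 1 1") (auto simp: max_def)
  finally show ?thesis .
qed

lemma M_mat_eq:
  assumes "i < 2" "j < 2"
  shows "M_mat 2 A i j = cyc \<delta> 0 i j"
proof -
  have "{..<2::nat} = {0, 1}" by auto
  then have "M_mat 2 A i j = max (mp_id i j) (mp_mult 2 mp_id (N_mat 2 A) i j)"
    unfolding M_mat_def by (simp add: sup_max)
  also have "mp_mult 2 mp_id (N_mat 2 A) i j = cyc \<delta> 0 i j"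
    using assms delta_neg by (subst mp_mult_id_left) (auto simp: N_mat_eq cyc_def)
  finally show ?thesis
    using assms by (auto simp: mp_id_def cyc_def less_2_iff)
qed

lemma CSR_eq:
  assumes "i < 2" "j < 2"
  shows "CSR 2 A t i j = cyc \<delta> t i j"
proof -
  have "mp_mult 2 (C_mat 2 A) (mp_pow 2 (S_mat 2 A) t) i l = cyc \<delta> t i l" if "l < 2" for l
  proof -
    have "mp_mult 2 (C_mat 2 A) (mp_pow 2 (S_mat 2 A) t) i l = mp_mult 2 (cyc \<delta> 0) (cyc (-\<infinity>) t) i l"
      using assms that by (intro mp_mult_cong) (simp_all add: C_mat_def crit_node_iff M_mat_eq S_pow)
    then show ?thesis using cyc_mult[of \<delta> "-\<infinity>" i l 0 t] delta_neg assms that by simp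
  qed
  then have "CSR 2 A t i j = mp_mult 2 (cyc \<delta> t) (cyc \<delta> 0) i j"
    unfolding CSR_def using assms by (intro mp_mult_cong) (simp_all add: R_mat_def crit_node_iff M_mat_eq)
  then show ?thesis using cyc_mult[of \<delta> \<delta> i j t 0] delta_neg assms by simp
qed

lemma B_N_pow: "i < 2 \<Longrightarrow> mp_pow 2 (B_N 2 A) (Suc t) i j = -\<infinity>"
  by (rule mp_pow_Suc_null_rows) (simp_all add: B_N_def crit_node_iff)

lemma T1_eq_2_iff: "T1 2 A = 2 \<longleftrightarrow> A 0 0 \<noteq> A 1 1"
proof -
  define P where "P t \<longleftrightarrow> (\<forall>i<2. \<forall>j<2.
      mp_pow 2 A t i j = max (CSR 2 A t i j) (mp_pow 2 (B_N 2 A) t i j))" for t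
  have P_Suc: "P (Suc t) \<longleftrightarrow> (\<forall>i<2. \<forall>j<2. mp_pow 2 A (Suc t) i j = cyc \<delta> (Suc t) i j)" for t
    unfolding P_def by (simp add: B_N_pow CSR_eq del: mp_pow.simps)
  have P_ge_2: "P t" if "2 \<le> t" for t
    using that P_Suc[of "t - 1"] A_pow by simp
  have "P 1 \<longleftrightarrow> A 0 0 = A 1 1"
    using P_Suc[of 0] A_eq_cyc_1_iff A_finite by (simp add: mp_mult_id_left)
  moreover have "(\<forall>t\<ge>1. P t) \<longleftrightarrow> P 1"
    using P_ge_2 by (metis le_antisym not_less_eq_eq One_nat_def Suc_1 order_refl)
  ultimately have "(LEAST T. \<forall>t\<ge>T. P t) = Suc 1 \<longleftrightarrow> A 0 0 \<noteq> A 1 1"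
    using P_ge_2 by (subst Least_eq_Suc_iff) auto
  then show ?thesis unfolding T1_def P_def Suc_1 .
qed

end

lemma dominant_two_cycle_if_girth_2:
  assumes fin: "\<forall>i<2. \<forall>j<2. A i j \<noteq> \<infinity>"
    and "mcm 2 A \<noteq> -\<infinity>" and "g_crit 2 A = 2"
  obtains L p q where "dominant_two_cycle A L p q"
proof -
  note mcm = mcm_2x2[OF fin]
  have "A 0 0 \<noteq> \<infinity>" "A 1 1 \<noteq> \<infinity>" using fin by auto
  then have "mcm 2 A \<noteq> \<infinity>"
    using fin unfolding mcm by (cases "A 0 1"; cases "A 1 0") (auto simp: max_def)
  then obtain L where L: "mcm 2 A = ereal L" using assms(2) by (cases "mcm 2 A") auto
  have diag: "A k k < ereal L" if "k < 2" for k
  proof -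
    have "A k k \<le> max (max (A 0 0) (A 1 1)) ((A 0 1 + A 1 0) / 2)"
      using that by (auto simp: less_2_iff le_max_iff_disj)
    then have "A k k \<le> ereal L" using L unfolding mcm by simp
    moreover have "A k k \<noteq> ereal L" using critical_loop_girth[OF L that] assms(3) by auto
    ultimately show ?thesis by simp
  qed
  then have "max (A 0 0) (A 1 1) < ereal L" by simp
  moreover have "max (max (A 0 0) (A 1 1)) ((A 0 1 + A 1 0) / 2) = ereal L"
    using L unfolding mcm .
  ultimately have "(A 0 1 + A 1 0) / 2 = ereal L"
    by (metis max.strict_order_iff max_def)
  moreover obtain p q where pq: "A 0 1 = ereal p" "A 1 0 = ereal q"
    using calculation fin by (cases "A 0 1"; cases "A 1 0") auto
  ultimately have "p + q = 2 * L" by simp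
  with diag pq show ?thesis by (intro that[of L p q]) (unfold_locales, auto)
qed

theorem propositionp:
  fixes A :: mpmat
  assumes "\<forall>i<2. \<forall>j<2. A i j \<noteq> \<infinity>"
    and "mcm 2 A \<noteq> -\<infinity>"
    and "g_crit 2 A = 2"
  shows "T1 2 A = DM 2 2 \<longleftrightarrow> A 0 0 \<noteq> A 1 1"
proof -
  obtain L p q where "dominant_two_cycle A L p q"
    using dominant_two_cycle_if_girth_2[OF assms] .
  then interpret dominant_two_cycle A L p q .
  have "DM 2 2 = 2" by (simp add: DM_def)
  then show ?thesis using T1_eq_2_iff by simp
qed

end
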